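(* Let $n\ge 2$ be even, $K_n=(V,E)$ the complete graph, and $M_1,M_2$ perfect matchings in $K_n$. If the graph $(V,M_1\triangle M_2)$ has a single non-trivial connected component, then $\bm{c}=\chi(M_1)-\chi(M_2)$ is a circuit of the Perfect Matching polytope $P_{\mathrm{perfmatch}}(n)=\operatorname{conv}\{\chi(M): M\text{ a perfect matching in }K_n\}$, with circuits taken with respect to the linear description $$\bm{x}(\delta(S))\ge 1\ \text{for all } S\subset V,\ |S|\text{ odd},\ |S|\ge 3;\quad \bm{x}(\delta(v))=1\ \text{for all } v\in V;\quad \bm{x}\ge\bm{0}.$$
   Context: $\chi(M)\in\{0,1\}^E$ is the characteristic vector of $M$; $\triangle$ is symmetric difference; a non-trivial component has more than one node; $\delta(S)$ is the set of edges with exactly one endpoint in $S$, $\delta(v)=\delta(\{v\})$, $\bm{x}(F)=\sum_{e\in F}x_e$. Circuits: for a polytope $P=\{\bm{x}: A\bm{x}=\bm{b},\ B\bm{x}\le \bm{d}\}$ given by a fixed linear system, a nonzero vector $\bm{g}$ is a circuit of $P$ if $A\bm{g}=\bm{0}$ and $\operatorname{supp}(B\bm{g})$ is inclusion-minimal among the sets $\operatorname{supp}(B\bm{y})$ with $A\bm{y}=\bm{0}$, $\bm{y}\neq\bm{0}$. *)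

theory Defs
  imports Complex_Main
begin

text \<open>Complete graph K_n on vertex set V = {0..<n}; edges are 2-element vertex sets.
  Vectors in R^E are functions nat set => real vanishing outside E.\<close>

definition Kedges :: "nat \<Rightarrow> nat set set" where
  "Kedges n = {{u, v} | u v. u < n \<and> v < n \<and> u \<noteq> v}"

definition cut :: "nat \<Rightarrow> nat set \<Rightarrow> nat set set" where
  "cut n S = {e \<in> Kedges n. card (e \<inter> S) = 1}"

definition perfect_matching :: "nat \<Rightarrow> nat set set \<Rightarrow> bool" where
  "perfect_matching n M \<longleftrightarrow> M \<subseteq> Kedges n \<and> (\<forall>v<n. \<exists>!e. e \<in> M \<and> v \<in> e)"

definition charvec :: "nat set set \<Rightarrow> nat set \<Rightarrow> real" where
  "charvec M e = (if e \<in> M then 1 else 0)"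

definition adj :: "nat set set \<Rightarrow> (nat \<times> nat) set" where
  "adj F = {(u, v). {u, v} \<in> F \<and> u \<noteq> v}"

definition component :: "nat \<Rightarrow> nat set set \<Rightarrow> nat \<Rightarrow> nat set" where
  "component n F v = {u. u < n \<and> (v, u) \<in> (adj F)\<^sup>*}"

definition nontrivial_components :: "nat \<Rightarrow> nat set set \<Rightarrow> nat set set" where
  "nontrivial_components n F = {component n F v | v. v < n \<and> card (component n F v) > 1}"

text \<open>Linear system of the perfect matching polytope:
  equalities x(delta(v)) = 1 (v in V); inequality rows x(delta(S)) >= 1 for S a proper
  subset of V with |S| odd, |S| >= 3 (indexed by Inl S), and x_e >= 0 (indexed by Inr e).
  pm_ineq_supp n y is supp(B y).\<close>

definition in_RE :: "nat \<Rightarrow> (nat set \<Rightarrow> real) \<Rightarrow> bool" where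
  "in_RE n y \<longleftrightarrow> (\<forall>e. e \<notin> Kedges n \<longrightarrow> y e = 0)"

definition pm_eq_kernel :: "nat \<Rightarrow> (nat set \<Rightarrow> real) \<Rightarrow> bool" where
  "pm_eq_kernel n y \<longleftrightarrow> (\<forall>v<n. sum y (cut n {v}) = 0)"

definition pm_ineq_supp :: "nat \<Rightarrow> (nat set \<Rightarrow> real) \<Rightarrow> (nat set + nat set) set" where
  "pm_ineq_supp n y =
     Inl ` {S. S \<subseteq> {..<n} \<and> S \<noteq> {..<n} \<and> odd (card S) \<and> card S \<ge> 3 \<and> sum y (cut n S) \<noteq> 0}
     \<union> Inr ` {e \<in> Kedges n. y e \<noteq> 0}"

definition pm_circuit :: "nat \<Rightarrow> (nat set \<Rightarrow> real) \<Rightarrow> bool" where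
  "pm_circuit n g \<longleftrightarrow>
     in_RE n g \<and> (\<exists>e\<in>Kedges n. g e \<noteq> 0) \<and> pm_eq_kernel n g \<and>
     (\<forall>y. in_RE n y \<and> (\<exists>e\<in>Kedges n. y e \<noteq> 0) \<and> pm_eq_kernel n y \<and>
          pm_ineq_supp n y \<subseteq> pm_ineq_supp n g \<longrightarrow> pm_ineq_supp n y = pm_ineq_supp n g)"

end

theory Submission
  imports Defs
begin

text \<open>Let \<open>F = M\<^sub>1 \<triangle> M\<^sub>2\<close> and \<open>g = \<chi>(M\<^sub>1) - \<chi>(M\<^sub>2)\<close>. Take \<open>y \<noteq> 0\<close> in the kernel of the
  degree equations whose inequality support lies in that of \<open>g\<close>. The rows \<open>x\<^sub>e \<ge> 0\<close> force
  \<open>y\<close> to vanish off \<open>F\<close>. Every vertex of \<open>F\<close> meets exactly one edge of \<open>M\<^sub>1 - M\<^sub>2\<close> and one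
  of \<open>M\<^sub>2 - M\<^sub>1\<close>, so its degree equation says \<open>y\<close> takes opposite values on them; hence
  \<open>y e \<cdot> g e\<close> is the same on any two edges of \<open>F\<close> sharing a vertex, and therefore constant on
  the single non-trivial component of \<open>F\<close>. Thus \<open>y = c g\<close> with \<open>c \<noteq> 0\<close>, and a non-zero
  multiple of \<open>g\<close> has the same inequality support as \<open>g\<close>.\<close>

lemma Kedges_subset_Pow: "Kedges n \<subseteq> Pow {..<n}"
  by (auto simp: Kedges_def)

lemma finite_Kedges: "finite (Kedges n)"
  using finite_subset[OF Kedges_subset_Pow] by auto

lemma finite_cut: "finite (cut n S)"
  using finite_Kedges by (auto simp: cut_def)

lemma cut_singleton: "cut n {v} = {e \<in> Kedges n. v \<in> e}"
proof -
  have "card (e \<inter> {v}) = 1 \<longleftrightarrow> v \<in> e" for e :: "nat set"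
    by (cases "v \<in> e") auto
  then show ?thesis by (auto simp: cut_def)
qed

lemma perfect_matching_edge_unique:
  assumes "perfect_matching n M" "e \<in> M" "e' \<in> M" "v \<in> e" "v \<in> e'"
  shows "e = e'"
proof -
  have "v < n" using assms Kedges_subset_Pow unfolding perfect_matching_def by blast
  then show ?thesis using assms unfolding perfect_matching_def by metis
qed

lemma perfect_matching_cut_sum:
  assumes "perfect_matching n M" "v < n"
  shows "sum (charvec M) (cut n {v}) = 1"
proof -
  from assms obtain e where e: "e \<in> M" "v \<in> e"
    unfolding perfect_matching_def by metis
  have "e \<in> Kedges n" using assms e unfolding perfect_matching_def by auto
  then have "sum (charvec M) (cut n {v}) = sum (charvec M) {e}"
    using e perfect_matching_edge_unique[OF assms(1) e(1)]
    by (intro sum.mono_neutral_right finite_cut) (auto simp: cut_singleton charvec_def)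
  also have "\<dots> = 1" using e by (simp add: charvec_def)
  finally show ?thesis .
qed

lemma pm_eq_kernel_charvec_diff:
  assumes "perfect_matching n M1" "perfect_matching n M2"
  shows "pm_eq_kernel n (\<lambda>e. charvec M1 e - charvec M2 e)"
  using perfect_matching_cut_sum[OF assms(1)] perfect_matching_cut_sum[OF assms(2)]
  by (simp add: pm_eq_kernel_def sum_subtractf)

lemma in_RE_charvec_diff:
  assumes "perfect_matching n M1" "perfect_matching n M2"
  shows "in_RE n (\<lambda>e. charvec M1 e - charvec M2 e)"
  using assms by (auto simp: in_RE_def charvec_def perfect_matching_def)

lemma pm_ineq_supp_scale:
  assumes "c \<noteq> 0"
  shows "pm_ineq_supp n (\<lambda>e. c * g e) = pm_ineq_supp n g"
  using assms by (simp add: pm_ineq_supp_def sum_distrib_left[symmetric])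

lemma pm_ineq_supp_subset_vanishes:
  assumes "in_RE n y" "pm_ineq_supp n y \<subseteq> pm_ineq_supp n g" "g e = 0"
  shows "y e = 0"
proof (cases "e \<in> Kedges n")
  case True
  then have "Inr e \<notin> pm_ineq_supp n g" using assms(3) by (auto simp: pm_ineq_supp_def)
  then have "Inr e \<notin> pm_ineq_supp n y" using assms(2) by blast
  then show ?thesis using True by (auto simp: pm_ineq_supp_def)
next
  case False
  then show ?thesis using assms(1) by (auto simp: in_RE_def)
qed

lemma edge_component_nontrivial:
  assumes "F \<subseteq> Kedges n" "{p, q} \<in> F" "p \<noteq> q"
  shows "component n F p \<in> nontrivial_components n F"
proof -
  have pq: "p < n" "q < n" using assms Kedges_subset_Pow by blast+
  have "(p, q) \<in> adj F" using assms by (auto simp: adj_def)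
  then have "{p, q} \<subseteq> component n F p" using pq by (auto simp: component_def)
  moreover have "finite (component n F p)" by (auto simp: component_def)
  ultimately have "card {p, q} \<le> card (component n F p)" by (rule card_mono[rotated])
  then show ?thesis using assms(3) pq by (auto simp: nontrivial_components_def)
qed

lemma nontrivial_components_obtain_edge:
  assumes "X \<in> nontrivial_components n F"
  obtains a b where "{a, b} \<in> F" "a \<noteq> b"
proof -
  from assms obtain v where v: "X = component n F v" "card X > 1"
    by (auto simp: nontrivial_components_def)
  have "\<not> X \<subseteq> {v}"
    using card_mono[of "{v}" X] v(2) by fastforce
  then obtain u where "(v, u) \<in> (adj F)\<^sup>*" "u \<noteq> v" using v by (auto simp: component_def)
  then obtain w where "(v, w) \<in> adj F" by (metis converse_rtranclE)
  then show ?thesis using that by (auto simp: adj_def)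
qed

lemma locally_constant_on_single_component:
  assumes "F \<subseteq> Kedges n" "card (nontrivial_components n F) = 1"
    and local: "\<And>v e1 e2. e1 \<in> F \<Longrightarrow> e2 \<in> F \<Longrightarrow> v \<in> e1 \<Longrightarrow> v \<in> e2 \<Longrightarrow> h e1 = h e2"
  shows "\<exists>c. \<forall>e\<in>F. h e = c"
proof -
  obtain X where X: "nontrivial_components n F = {X}"
    using assms(2) by (rule card_1_singletonE)
  then obtain a b where ab: "{a, b} \<in> F" "a \<noteq> b"
    using nontrivial_components_obtain_edge[of X n F] by blast
  have reach: "\<forall>e\<in>F. u \<in> e \<longrightarrow> h e = h {a, b}" if "(a, u) \<in> (adj F)\<^sup>*" for u
    using that
  proof (induction rule: rtrancl_induct)
    case base
    show ?case using local[OF _ ab(1) _ insertI1] by (intro ballI impI)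
  next
    case (step u w)
    then have uw: "{u, w} \<in> F" and uw_value: "h {u, w} = h {a, b}" by (auto simp: adj_def)
    show ?case
    proof (intro ballI impI)
      fix e assume "e \<in> F" "w \<in> e"
      then show "h e = h {a, b}" using local[OF \<open>e \<in> F\<close> uw \<open>w \<in> e\<close>] uw_value by simp
    qed
  qed
  have "h e = h {a, b}" if "e \<in> F" for e
  proof -
    have "e \<in> Kedges n" using that assms(1) by blast
    then obtain p q where e: "e = {p, q}" "p \<noteq> q" unfolding Kedges_def by blast
    have "component n F p = component n F a"
      using edge_component_nontrivial[OF assms(1), of p q] e that
        edge_component_nontrivial[OF assms(1) ab] X by simp
    moreover have "p \<in> component n F p"
      using e that assms(1) Kedges_subset_Pow by (auto simp: component_def)
    ultimately have "(a, p) \<in> (adj F)\<^sup>*" by (auto simp: component_def)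
    then show ?thesis using reach e that by blast
  qed
  then show ?thesis by blast
qed

lemma symdiff_edges_at_vertex_alternate:
  assumes "perfect_matching n M1" "perfect_matching n M2"
    and "e1 \<in> M1 - M2 \<union> (M2 - M1)" "e2 \<in> M1 - M2 \<union> (M2 - M1)" "e1 \<noteq> e2"
    and "v \<in> e1" "v \<in> e2"
  shows "e1 \<in> M1 - M2 \<and> e2 \<in> M2 - M1 \<or> e1 \<in> M2 - M1 \<and> e2 \<in> M1 - M2"
  using assms perfect_matching_edge_unique[OF assms(1) _ _ assms(6,7)]
    perfect_matching_edge_unique[OF assms(2) _ _ assms(6,7)]
  by blast

lemma kernel_opposite_on_alternating_pair:
  assumes M1: "perfect_matching n M1" and M2: "perfect_matching n M2"
    and "pm_eq_kernel n y" and off: "\<And>e. e \<notin> M1 - M2 \<union> (M2 - M1) \<Longrightarrow> y e = 0"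
    and e1: "e1 \<in> M1 - M2" and e2: "e2 \<in> M2 - M1" and "v \<in> e1" "v \<in> e2"
  shows "y e1 = - y e2"
proof -
  have K: "e1 \<in> Kedges n" "e2 \<in> Kedges n"
    using e1 e2 M1 M2 by (auto simp: perfect_matching_def)
  then have "v < n" using \<open>v \<in> e1\<close> Kedges_subset_Pow by blast
  have "y i = 0" if "i \<in> cut n {v} - {e1, e2}" for i
  proof (rule off)
    from that have "v \<in> i" "i \<noteq> e1" "i \<noteq> e2" by (auto simp: cut_singleton)
    then show "i \<notin> M1 - M2 \<union> (M2 - M1)"
      using e1 e2 perfect_matching_edge_unique[OF M1 _ _ \<open>v \<in> e1\<close>]
        perfect_matching_edge_unique[OF M2 _ _ \<open>v \<in> e2\<close>] by blast
  qed
  then have "sum y {e1, e2} = sum y (cut n {v})"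
    using K \<open>v \<in> e1\<close> \<open>v \<in> e2\<close>
    by (intro sum.mono_neutral_left finite_cut) (auto simp: cut_singleton)
  also have "\<dots> = 0" using assms(3) \<open>v < n\<close> by (auto simp: pm_eq_kernel_def)
  finally show ?thesis using e1 e2 by (simp add: sum.insert_if split: if_splits)
qed

lemma kernel_vector_proportional_to_symdiff:
  assumes M1: "perfect_matching n M1" and M2: "perfect_matching n M2"
    and single: "card (nontrivial_components n (M1 - M2 \<union> (M2 - M1))) = 1"
    and "pm_eq_kernel n y" and off: "\<And>e. e \<notin> M1 - M2 \<union> (M2 - M1) \<Longrightarrow> y e = 0"
  shows "\<exists>c. y = (\<lambda>e. c * (charvec M1 e - charvec M2 e))"
proof -
  define F where "F = M1 - M2 \<union> (M2 - M1)"
  define g where "g = (\<lambda>e. charvec M1 e - charvec M2 e)"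
  have g_F: "g e = 1 \<or> g e = -1" if "e \<in> F" for e
    using that by (auto simp: F_def g_def charvec_def)
  have "y e1 * g e1 = y e2 * g e2" if "e1 \<in> F" "e2 \<in> F" "v \<in> e1" "v \<in> e2" for e1 e2 v
  proof (cases "e1 = e2")
    case False
    then show ?thesis
      using symdiff_edges_at_vertex_alternate[OF M1 M2, of e1 e2 v] that
        kernel_opposite_on_alternating_pair[OF M1 M2 assms(4) off, of e1 e2 v]
        kernel_opposite_on_alternating_pair[OF M1 M2 assms(4) off, of e2 e1 v]
      by (auto simp: F_def g_def charvec_def)
  qed simp
  moreover have "F \<subseteq> Kedges n" using M1 M2 by (auto simp: F_def perfect_matching_def)
  ultimately obtain c where c: "\<forall>e\<in>F. y e * g e = c"
    using locally_constant_on_single_component[of F n "\<lambda>e. y e * g e"] single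
    unfolding F_def by blast
  have "y e = c * g e" for e
  proof (cases "e \<in> F")
    case True
    then show ?thesis using c g_F[OF True] by auto
  next
    case False
    then show ?thesis using off by (auto simp: F_def g_def charvec_def)
  qed
  then show ?thesis unfolding g_def by blast
qed

theorem corollary2:
  fixes n :: nat and M1 M2 :: "nat set set"
  assumes "n \<ge> 2" and "even n"
    and "perfect_matching n M1" and "perfect_matching n M2"
    and "card (nontrivial_components n (M1 - M2 \<union> (M2 - M1))) = 1"
  shows "pm_circuit n (\<lambda>e. charvec M1 e - charvec M2 e)"
proof -
  define g where "g = (\<lambda>e. charvec M1 e - charvec M2 e)"
  have g_off: "g e = 0" if "e \<notin> M1 - M2 \<union> (M2 - M1)" for e
    using that by (auto simp: g_def charvec_def)
  obtain a b where "{a, b} \<in> M1 - M2 \<union> (M2 - M1)"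
    using assms(5) nontrivial_components_obtain_edge
    by (metis card_1_singletonE insertI1)
  then have "\<exists>e\<in>Kedges n. g e \<noteq> 0"
    using assms(3,4) by (auto simp: g_def charvec_def perfect_matching_def)
  moreover have "pm_ineq_supp n y = pm_ineq_supp n g"
    if y: "in_RE n y" "\<exists>e\<in>Kedges n. y e \<noteq> 0" "pm_eq_kernel n y"
      "pm_ineq_supp n y \<subseteq> pm_ineq_supp n g" for y
  proof -
    have "y e = 0" if "e \<notin> M1 - M2 \<union> (M2 - M1)" for e
      using pm_ineq_supp_subset_vanishes[OF y(1,4) g_off[OF that]] .
    then obtain c where c: "y = (\<lambda>e. c * g e)"
      using kernel_vector_proportional_to_symdiff[OF assms(3-5) y(3)] unfolding g_def by blast
    then have "c \<noteq> 0" using y(2) by auto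
    then show ?thesis using c pm_ineq_supp_scale by blast
  qed
  ultimately show ?thesis
    using in_RE_charvec_diff[OF assms(3,4)] pm_eq_kernel_charvec_diff[OF assms(3,4)]
    unfolding pm_circuit_def g_def by blast
qed

end
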